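(* Let $G$ be a finite abstract simplicial complex with connection graph $G'$. For $x\in G$ let $B(x)$ be the closed unit ball of $x$ in $G'$ and $d(x)$ the vertex degree of $x$ in $G'$. Then $d(x)=\sum_{y\in B(x)}\chi(S^+(y))$.
   Context: A finite abstract simplicial complex $G$ is a finite set of non-empty finite sets closed under taking non-empty subsets. The connection graph $G'$ has vertex set $G$, with distinct simplices adjacent iff they intersect; $B(x)$ consists of $x$ and all its neighbors in $G'$. The graph $G_1$ has vertex set $G$ with $x\neq y$ adjacent iff $x\subset y$ or $y\subset x$. For $y\in G$, $S^+(y)=\{z\in G: y\subsetneq z\}$, and $\chi(S^+(y))$ is the Euler characteristic $\sum_K(-1)^{|K|-1}$ over non-empty cliques $K$ of the subgraph of $G_1$ induced on $S^+(y)$ (so $\chi(\emptyset)=0$). *)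

theory Defs
  imports Main
begin

definition simplicial_complex :: "'a set set \<Rightarrow> bool" where
  "simplicial_complex G \<longleftrightarrow> finite G \<and>
     (\<forall>x\<in>G. finite x \<and> x \<noteq> {}) \<and>
     (\<forall>x\<in>G. \<forall>y. y \<subseteq> x \<and> y \<noteq> {} \<longrightarrow> y \<in> G)"

definition conn_adj :: "'a set set \<Rightarrow> 'a set \<Rightarrow> 'a set \<Rightarrow> bool" where
  "conn_adj G x y \<longleftrightarrow> x \<in> G \<and> y \<in> G \<and> x \<noteq> y \<and> x \<inter> y \<noteq> {}"

definition unit_ball :: "'a set set \<Rightarrow> 'a set \<Rightarrow> 'a set set" where
  "unit_ball G x = {x} \<union> {y. conn_adj G x y}"

definition conn_degree :: "'a set set \<Rightarrow> 'a set \<Rightarrow> nat" where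
  "conn_degree G x = card {y. conn_adj G x y}"

definition G1_adj :: "'a set \<Rightarrow> 'a set \<Rightarrow> bool" where
  "G1_adj x y \<longleftrightarrow> x \<noteq> y \<and> (x \<subseteq> y \<or> y \<subseteq> x)"

definition S_plus :: "'a set set \<Rightarrow> 'a set \<Rightarrow> 'a set set" where
  "S_plus G y = {z \<in> G. y \<subset> z}"

definition cliques_G1 :: "'a set set \<Rightarrow> 'a set set set" where
  "cliques_G1 S = {K. K \<subseteq> S \<and> K \<noteq> {} \<and> (\<forall>u\<in>K. \<forall>v\<in>K. u \<noteq> v \<longrightarrow> G1_adj u v)}"

definition chi_G1 :: "'a set set \<Rightarrow> int" where
  "chi_G1 S = (\<Sum>K\<in>cliques_G1 S. (-1) ^ (card K - 1))"

end

theory Submission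
  imports Defs
begin

(* Write h y = 1 - chi (S+ y).  Splitting every chain of S+ y at its least element m shows
   chi (S+ y) = sum of h m over m in S+ y, i.e. the sum of h over all faces containing a
   face y is 1.  A face lies in B x iff it meets x, so inclusion-exclusion over the
   non-empty faces T of x gives  sum of h over B x = sum over T of (-1)^(|T|+1) = 1.
   Hence the sum of chi (S+ y) over B x is |B x| - 1 = d x. *)

lemma sum_Pow_minus_one_power:
  assumes "finite A" "A \<noteq> {}"
  shows "(\<Sum>T\<in>Pow A. (-1) ^ card T) = (0::'b::ring_1)"
proof -
  have "card {T. T \<subseteq> A \<and> {} \<subseteq> T \<and> even (card T)} = card {T. T \<subseteq> A \<and> {} \<subseteq> T \<and> odd (card T)}"
    using assms by (intro card_subsupersets_even_odd) auto
  then show ?thesis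
    using assms by (intro sum_alternating_cancels) (simp_all add: Pow_def)
qed

lemma sum_nonempty_subsets_minus_one_power:
  assumes "finite A"
  shows "(\<Sum>T\<in>Pow A - {{}}. (-1) ^ (card T + 1)) = (if A = {} then 0 else (1::'b::ring_1))"
proof -
  have "(\<Sum>T\<in>Pow A - {{}}. (-1) ^ (card T + 1)) = - (\<Sum>T\<in>Pow A - {{}}. (-1) ^ card T :: 'b)"
    by (simp add: sum_negf)
  also have "\<dots> = 1 - (\<Sum>T\<in>Pow A. (-1) ^ card T)"
    using assms by (simp add: sum_diff1)
  finally show ?thesis
    using assms sum_Pow_minus_one_power[of A] by auto
qed

lemma sum_meeting_inclusion_exclusion:
  fixes f :: "'a set \<Rightarrow> 'b::ring_1"
  assumes "finite G" "finite x"
  shows "(\<Sum>y | y \<in> G \<and> y \<inter> x \<noteq> {}. f y)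
       = (\<Sum>T\<in>Pow x - {{}}. (-1) ^ (card T + 1) * (\<Sum>m | m \<in> G \<and> T \<subseteq> m. f m))"
proof -
  have "(\<Sum>T\<in>Pow x - {{}}. (-1) ^ (card T + 1) * (\<Sum>m | m \<in> G \<and> T \<subseteq> m. f m))
      = (\<Sum>m\<in>G. (\<Sum>T | T \<in> Pow x - {{}} \<and> T \<subseteq> m. (-1) ^ (card T + 1)) * f m)"
    using assms by (simp add: sum_distrib_left sum_distrib_right sum.swap_restrict)
  also have "\<dots> = (\<Sum>m\<in>G. if m \<inter> x \<noteq> {} then f m else 0)"
  proof (rule sum.cong[OF refl])
    fix m
    have subsets: "{T. T \<in> Pow x - {{}} \<and> T \<subseteq> m} = Pow (m \<inter> x) - {{}}" by auto
    have "(\<Sum>T | T \<in> Pow x - {{}} \<and> T \<subseteq> m. (-1) ^ (card T + 1))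
        = (if m \<inter> x = {} then 0 else (1::'b))"
      unfolding subsets using assms(2)
      by (simp only: sum_nonempty_subsets_minus_one_power finite_Int simp_thms)
    then show "(\<Sum>T | T \<in> Pow x - {{}} \<and> T \<subseteq> m. (-1) ^ (card T + 1)) * f m
        = (if m \<inter> x \<noteq> {} then f m else 0)"
      by simp
  qed
  also have "\<dots> = (\<Sum>y | y \<in> G \<and> y \<inter> x \<noteq> {}. f y)"
    using assms(1) by (simp add: sum.inter_filter)
  finally show ?thesis ..
qed

lemma chain_has_least:
  assumes "finite K" "K \<noteq> {}" "\<forall>u\<in>K. \<forall>v\<in>K. u \<noteq> v \<longrightarrow> G1_adj u v"
  shows "\<exists>m\<in>K. \<forall>u\<in>K. m \<subseteq> u"
proof -
  obtain m where "m \<in> K" "\<forall>u\<in>K. u \<subseteq> m \<longrightarrow> m = u"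
    using finite_has_minimal[OF assms(1,2)] by blast
  then show ?thesis
    using assms(3) unfolding G1_adj_def by (metis order_refl)
qed

lemma finite_cliques_G1: "finite S \<Longrightarrow> finite (cliques_G1 S)"
  unfolding cliques_G1_def by (rule finite_subset[of _ "Pow S"]) auto

lemma bij_betw_insert_least_cliques_G1:
  assumes "finite S"
  shows "bij_betw (\<lambda>(m, K). insert m K)
           (SIGMA m:S. insert {} (cliques_G1 {u \<in> S. m \<subset> u})) (cliques_G1 S)"
proof -
  have above: "\<forall>u\<in>K. u \<in> S \<and> m \<subset> u"
    if "K \<in> insert {} (cliques_G1 {u \<in> S. m \<subset> u})" for m K
    using that unfolding cliques_G1_def by auto
  have chain: "\<forall>u\<in>K. \<forall>v\<in>K. u \<noteq> v \<longrightarrow> G1_adj u v"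
    if "K \<in> insert {} (cliques_G1 T)" for K T
    using that unfolding cliques_G1_def by auto
  have "inj_on (\<lambda>(m, K). insert m K) (SIGMA m:S. insert {} (cliques_G1 {u \<in> S. m \<subset> u}))"
  proof (rule inj_onI, clarify)
    fix m K m' K'
    assume K: "K \<in> insert {} (cliques_G1 {u \<in> S. m \<subset> u})"
      and K': "K' \<in> insert {} (cliques_G1 {u \<in> S. m' \<subset> u})"
      and eq: "insert m K = insert m' K'"
    have "m \<notin> K" "m' \<notin> K'"
      using above[OF K] above[OF K'] by auto
    have "m = m'"
    proof (rule ccontr)
      assume "m \<noteq> m'"
      then have "m' \<in> K" "m \<in> K'"
        using eq by (metis insertE insertI1)+
      then have "m \<subset> m'" "m' \<subset> m"
        using above[OF K] above[OF K'] by simp_all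
      then show False
        by simp
    qed
    moreover have "K = K'"
      using eq \<open>m = m'\<close> \<open>m \<notin> K\<close> \<open>m' \<notin> K'\<close> by (metis Diff_insert_absorb)
    ultimately show "m = m' \<and> K = K'" ..
  qed
  moreover have "(\<lambda>(m, K). insert m K) ` (SIGMA m:S. insert {} (cliques_G1 {u \<in> S. m \<subset> u}))
      = cliques_G1 S"
  proof (intro equalityI subsetI)
    fix L assume "L \<in> (\<lambda>(m, K). insert m K) ` (SIGMA m:S. insert {} (cliques_G1 {u \<in> S. m \<subset> u}))"
    then obtain m K where m: "m \<in> S" and K: "K \<in> insert {} (cliques_G1 {u \<in> S. m \<subset> u})"
      and L: "L = insert m K" by blast
    show "L \<in> cliques_G1 S"
      using m above[OF K] chain[OF K] unfolding L cliques_G1_def G1_adj_def by blast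
  next
    fix L assume L: "L \<in> cliques_G1 S"
    then have "L \<subseteq> S" "L \<noteq> {}" and chain_L: "\<forall>u\<in>L. \<forall>v\<in>L. u \<noteq> v \<longrightarrow> G1_adj u v"
      unfolding cliques_G1_def by auto
    moreover have "finite L"
      using \<open>L \<subseteq> S\<close> assms by (rule finite_subset)
    ultimately obtain m where m: "m \<in> L" "\<forall>u\<in>L. m \<subseteq> u"
      using chain_has_least by metis
    have "(m, L - {m}) \<in> (SIGMA m:S. insert {} (cliques_G1 {u \<in> S. m \<subset> u}))"
      using m \<open>L \<subseteq> S\<close> chain_L unfolding cliques_G1_def by auto
    moreover have "L = (\<lambda>(m, K). insert m K) (m, L - {m})"
      using m(1) by (simp add: insert_absorb)
    ultimately show "L \<in> (\<lambda>(m, K). insert m K) ` (SIGMA m:S. insert {} (cliques_G1 {u \<in> S. m \<subset> u}))"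
      by (rule rev_image_eqI)
  qed
  ultimately show ?thesis
    unfolding bij_betw_def by blast
qed

lemma one_minus_chi_G1_eq_sum:
  assumes "finite S"
  shows "1 - chi_G1 S = (\<Sum>K\<in>insert {} (cliques_G1 S). (-1) ^ card K)"
proof -
  have "(-1) ^ (card K - 1) = - ((-1::int) ^ card K)" if "K \<in> cliques_G1 S" for K
  proof -
    have "K \<subseteq> S" "K \<noteq> {}"
      using that unfolding cliques_G1_def by auto
    then have "card K > 0"
      using assms by (simp add: card_gt_0_iff finite_subset)
    then show ?thesis
      by (cases "card K") auto
  qed
  then have "chi_G1 S = - (\<Sum>K\<in>cliques_G1 S. (-1) ^ card K)"
    unfolding chi_G1_def by (simp add: sum_negf)
  moreover have "{} \<notin> cliques_G1 S"
    unfolding cliques_G1_def by blast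
  ultimately show ?thesis
    by (simp add: sum.insert[OF finite_cliques_G1[OF assms]])
qed

lemma chi_G1_least_element_recursion:
  assumes "finite S"
  shows "chi_G1 S = (\<Sum>m\<in>S. 1 - chi_G1 {u \<in> S. m \<subset> u})"
proof -
  let ?Sigma = "SIGMA m:S. insert {} (cliques_G1 {u \<in> S. m \<subset> u})"
  have "chi_G1 S = (\<Sum>(m, K)\<in>?Sigma. (-1) ^ (card (insert m K) - 1))"
    unfolding chi_G1_def
    using sum.reindex_bij_betw[OF bij_betw_insert_least_cliques_G1[OF assms],
        of "\<lambda>K. (-1::int) ^ (card K - 1)"]
    by (simp add: split_def)
  also have "\<dots> = (\<Sum>(m, K)\<in>?Sigma. (-1) ^ card K)"
  proof (rule sum.cong[OF refl], clarify)
    fix m K assume "K \<in> insert {} (cliques_G1 {u \<in> S. m \<subset> u})"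
    then have "K \<subseteq> S" "m \<notin> K"
      unfolding cliques_G1_def by auto
    moreover from \<open>K \<subseteq> S\<close> assms have "finite K"
      by (rule finite_subset)
    ultimately show "(-1::int) ^ (card (insert m K) - 1) = (-1) ^ card K"
      by simp
  qed
  also have "\<dots> = (\<Sum>m\<in>S. \<Sum>K\<in>insert {} (cliques_G1 {u \<in> S. m \<subset> u}). (-1) ^ card K)"
    using assms by (simp add: sum.Sigma finite_cliques_G1)
  also have "\<dots> = (\<Sum>m\<in>S. 1 - chi_G1 {u \<in> S. m \<subset> u})"
    using assms by (simp add: one_minus_chi_G1_eq_sum)
  finally show ?thesis .
qed

lemma simplicial_complexD:
  assumes "simplicial_complex G"
  shows "finite G" "x \<in> G \<Longrightarrow> finite x" "x \<in> G \<Longrightarrow> x \<noteq> {}"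
    "x \<in> G \<Longrightarrow> y \<subseteq> x \<Longrightarrow> y \<noteq> {} \<Longrightarrow> y \<in> G"
  using assms unfolding simplicial_complex_def by blast+

lemma S_plus_restrict:
  assumes "m \<in> S_plus G y"
  shows "{u \<in> S_plus G y. m \<subset> u} = S_plus G m"
  using assms unfolding S_plus_def by (auto intro: psubset_trans)

lemma finite_S_plus: "finite G \<Longrightarrow> finite (S_plus G y)"
  unfolding S_plus_def by simp

lemma chi_G1_S_plus_recursion:
  assumes "finite G"
  shows "chi_G1 (S_plus G y) = (\<Sum>m\<in>S_plus G y. 1 - chi_G1 (S_plus G m))"
  unfolding chi_G1_least_element_recursion[OF finite_S_plus[OF assms, of y]]
  by (rule sum.cong[OF refl]) (simp only: S_plus_restrict)

lemma sum_supersets_one_minus_chi_G1: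
  assumes "finite G" "y \<in> G"
  shows "(\<Sum>m | m \<in> G \<and> y \<subseteq> m. 1 - chi_G1 (S_plus G m)) = 1"
proof -
  have "{m. m \<in> G \<and> y \<subseteq> m} = insert y (S_plus G y)" "y \<notin> S_plus G y"
    using assms(2) unfolding S_plus_def by auto
  then show ?thesis
    using chi_G1_S_plus_recursion[OF assms(1), of y] finite_S_plus[OF assms(1), of y] by simp
qed

lemma unit_ball_eq:
  assumes "simplicial_complex G" "x \<in> G"
  shows "unit_ball G x = {y. y \<in> G \<and> y \<inter> x \<noteq> {}}"
  using assms simplicial_complexD(3)[OF assms] unfolding unit_ball_def conn_adj_def by auto

lemma card_unit_ball:
  assumes "finite G"
  shows "card (unit_ball G x) = Suc (conn_degree G x)"
proof -
  have "finite {y. conn_adj G x y}" "x \<notin> {y. conn_adj G x y}"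
    using assms unfolding conn_adj_def by auto
  then show ?thesis
    unfolding unit_ball_def conn_degree_def by simp
qed

lemma sum_unit_ball_one_minus_chi_G1:
  assumes G: "simplicial_complex G" and "x \<in> G"
  shows "(\<Sum>y\<in>unit_ball G x. 1 - chi_G1 (S_plus G y)) = 1"
proof -
  have "finite G" "finite x" "x \<noteq> {}" and faces: "\<And>T. T \<in> Pow x - {{}} \<Longrightarrow> T \<in> G"
    using simplicial_complexD[OF G] \<open>x \<in> G\<close> by auto
  have "(\<Sum>y\<in>unit_ball G x. 1 - chi_G1 (S_plus G y))
      = (\<Sum>T\<in>Pow x - {{}}. (-1) ^ (card T + 1) * (\<Sum>m | m \<in> G \<and> T \<subseteq> m. 1 - chi_G1 (S_plus G m)))"
    unfolding unit_ball_eq[OF assms]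
    by (rule sum_meeting_inclusion_exclusion[OF \<open>finite G\<close> \<open>finite x\<close>])
  also have "\<dots> = (\<Sum>T\<in>Pow x - {{}}. (-1) ^ (card T + 1))"
    by (rule sum.cong[OF refl]) (simp add: faces sum_supersets_one_minus_chi_G1 \<open>finite G\<close>)
  also have "\<dots> = 1"
    using sum_nonempty_subsets_minus_one_power[OF \<open>finite x\<close>] \<open>x \<noteq> {}\<close> by simp
  finally show ?thesis .
qed

theorem mainTheorem13:
  fixes G :: "'a set set" and x :: "'a set"
  assumes "simplicial_complex G" and "x \<in> G"
  shows "int (conn_degree G x) = (\<Sum>y\<in>unit_ball G x. chi_G1 (S_plus G y))"
proof -
  have "(\<Sum>y\<in>unit_ball G x. chi_G1 (S_plus G y))
      = (\<Sum>y\<in>unit_ball G x. 1) - (\<Sum>y\<in>unit_ball G x. 1 - chi_G1 (S_plus G y))"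
    by (simp add: sum_subtractf)
  also have "\<dots> = int (card (unit_ball G x)) - 1"
    using sum_unit_ball_one_minus_chi_G1[OF assms] by simp
  also have "\<dots> = int (conn_degree G x)"
    using card_unit_ball[OF simplicial_complexD(1)[OF assms(1)]] by simp
  finally show ?thesis ..
qed

end
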